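(* Let $q=2^f\geq 4$ and $I=\{0,\ f,\ 2f/\gcd(3,f),\ 4f/\gcd(3,f)\}$. Let $b\in\mathbb{F}_{q^2}^\times$ with $b+b^q=1$ and $b^{q+1}\neq 1$, and let $a\in\mathbb{F}_{q^2}^\times$ have order $q+1$ and satisfy: $(1+b+b^2)^{2^i}\neq a+a^{-1}+1$ for all $i\in I$; $(1+b+b^2)^{2^i}\neq a(1+b+b^3+b^4)+a^{-1}(b^2+b^3+b^4)$ for all $i\in I$; $a+a^{-1}+1\neq a(1+b+b^3+b^4)+a^{-1}(b^2+b^3+b^4)$; and $a+a^{-1}+1\neq 0$. Let \[ X=\begin{pmatrix}b&1&1\\ b^q&0&1\\ b^{q+1}&b&b^q\end{pmatrix},\quad Y=\begin{pmatrix}ab+a^{-1}b^q&0&a(b+b^{q+1})+a^{-1}(b^q+b^{q+1})\\ 0&1&0\\ a+a^{-1}&0&ab+a^{-1}b^q\end{pmatrix},\quad Z=\begin{pmatrix}1&0&1\\ 0&1&0\\ 0&0&1\end{pmatrix}. \] Then $\langle X,Y,Z\rangle$ is an irreducible subgroup of $\mathrm{SU}_3(q)$, i.e. it stabilizes no subspace of $\mathbb{F}_{q^2}^3$ of dimension $1$ or $2$.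
   Context: Here $\mathrm{SU}_3(q)=\{A\in\mathrm{SL}_3(q^2): \overline{A}^{T}WA=W\}$, where $\overline{(a_{ij})}=(a_{ij}^q)$ and $W=\begin{pmatrix}0&0&1\\0&1&0\\1&0&0\end{pmatrix}$; matrices act on row vectors in $\mathbb{F}_{q^2}^3$ by right multiplication. *)

theory Defs
  imports "HOL-Analysis.Analysis"
begin

definition mat3 :: "'a::zero \<Rightarrow> 'a \<Rightarrow> 'a \<Rightarrow> 'a \<Rightarrow> 'a \<Rightarrow> 'a \<Rightarrow> 'a \<Rightarrow> 'a \<Rightarrow> 'a \<Rightarrow> 'a^3^3" where
  "mat3 a11 a12 a13 a21 a22 a23 a31 a32 a33 =
     vector [vector [a11, a12, a13], vector [a21, a22, a23], vector [a31, a32, a33]]"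

definition Wmat :: "'a::{zero,one} ^3^3" where
  "Wmat = mat3 0 0 1 0 1 0 1 0 0"

definition frob_mat :: "nat \<Rightarrow> 'a::comm_ring_1 ^3^3 \<Rightarrow> 'a^3^3" where
  "frob_mat q A = (\<chi> i j. (A $ i $ j) ^ q)"

text \<open>SU_3(q) inside SL_3(q^2) (the field 'a is meant to be F_{q^2}).\<close>
definition SU3 :: "nat \<Rightarrow> ('a::field ^3^3) set" where
  "SU3 q = {A. det A = 1 \<and> transpose (frob_mat q A) ** Wmat ** A = Wmat}"

inductive_set gen_group :: "('a::field ^3^3) set \<Rightarrow> ('a ^3^3) set"
  for S :: "('a::field ^3^3) set" where
  one: "mat 1 \<in> gen_group S"
| gen: "s \<in> S \<Longrightarrow> s \<in> gen_group S"
| mult: "A \<in> gen_group S \<Longrightarrow> B \<in> gen_group S \<Longrightarrow> A ** B \<in> gen_group S"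
| inv: "A \<in> gen_group S \<Longrightarrow> matrix_inv A \<in> gen_group S"

definition has_order :: "'a::field \<Rightarrow> nat \<Rightarrow> bool" where
  "has_order a n \<longleftrightarrow> 0 < n \<and> a ^ n = 1 \<and> (\<forall>k. 0 < k \<and> k < n \<longrightarrow> a ^ k \<noteq> 1)"

definition irreducible3 :: "('a::field ^3^3) set \<Rightarrow> bool" where
  "irreducible3 G \<longleftrightarrow>
     \<not> (\<exists>U :: ('a^3) set. vec.subspace U \<and> vec.dim U \<in> {1, 2} \<and>
          (\<forall>g\<in>G. (\<lambda>v. v v* g) ` U = U))"

end

theory Submission
  imports Defs "HOL-Number_Theory.Residues"
begin

(* The field has characteristic 2, so x \<mapsto> x^q is a ring endomorphism; with b^q = 1 + b and
   a^q = a^-1 the unitarity of X, Y, Z is a direct computation, and SU_3(q) is closed under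
   products and inverses because the Frobenius commutes with matrix multiplication.
   Irreducibility is elementary: a nonzero invariant subspace contains a vector with nonzero
   first coordinate (apply Y or X if necessary), hence e3 via the transvection Z, then e1 via
   Y and e2 via X, so it is the whole space. *)

lemma mat3_nth [simp]:
  "mat3 a11 a12 a13 a21 a22 a23 a31 a32 a33 $ 1 $ 1 = a11"
  "mat3 a11 a12 a13 a21 a22 a23 a31 a32 a33 $ 1 $ 2 = a12"
  "mat3 a11 a12 a13 a21 a22 a23 a31 a32 a33 $ 1 $ 3 = a13"
  "mat3 a11 a12 a13 a21 a22 a23 a31 a32 a33 $ 2 $ 1 = a21"
  "mat3 a11 a12 a13 a21 a22 a23 a31 a32 a33 $ 2 $ 2 = a22"
  "mat3 a11 a12 a13 a21 a22 a23 a31 a32 a33 $ 2 $ 3 = a23"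
  "mat3 a11 a12 a13 a21 a22 a23 a31 a32 a33 $ 3 $ 1 = a31"
  "mat3 a11 a12 a13 a21 a22 a23 a31 a32 a33 $ 3 $ 2 = a32"
  "mat3 a11 a12 a13 a21 a22 a23 a31 a32 a33 $ 3 $ 3 = a33"
  by (simp_all add: mat3_def)

lemma mat3_eq_iff:
  "mat3 a11 a12 a13 a21 a22 a23 a31 a32 a33 = mat3 b11 b12 b13 b21 b22 b23 b31 b32 b33 \<longleftrightarrow>
   a11 = b11 \<and> a12 = b12 \<and> a13 = b13 \<and> a21 = b21 \<and> a22 = b22 \<and> a23 = b23 \<and>
   a31 = b31 \<and> a32 = b32 \<and> a33 = b33"
  by (metis mat3_nth)

lemma mat3_mult:
  fixes a11 :: "'a::comm_ring_1"
  shows "mat3 a11 a12 a13 a21 a22 a23 a31 a32 a33 ** mat3 b11 b12 b13 b21 b22 b23 b31 b32 b33 =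
   mat3 (a11*b11 + a12*b21 + a13*b31) (a11*b12 + a12*b22 + a13*b32) (a11*b13 + a12*b23 + a13*b33)
        (a21*b11 + a22*b21 + a23*b31) (a21*b12 + a22*b22 + a23*b32) (a21*b13 + a22*b23 + a23*b33)
        (a31*b11 + a32*b21 + a33*b31) (a31*b12 + a32*b22 + a33*b32) (a31*b13 + a32*b23 + a33*b33)"
  by (simp add: vec_eq_iff forall_3 matrix_matrix_mult_def sum_3)

lemma mat3_transpose:
  "transpose (mat3 a11 a12 a13 a21 a22 a23 a31 a32 a33) = mat3 a11 a21 a31 a12 a22 a32 a13 a23 a33"
  by (simp add: vec_eq_iff forall_3 transpose_def)

lemma frob_mat_mat3:
  fixes a11 :: "'a::comm_ring_1"
  shows "frob_mat q (mat3 a11 a12 a13 a21 a22 a23 a31 a32 a33) =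
    mat3 (a11^q) (a12^q) (a13^q) (a21^q) (a22^q) (a23^q) (a31^q) (a32^q) (a33^q)"
  by (simp add: vec_eq_iff forall_3 frob_mat_def)

lemma det_mat3:
  fixes a11 :: "'a::comm_ring_1"
  shows "det (mat3 a11 a12 a13 a21 a22 a23 a31 a32 a33) =
    a11 * a22 * a33 + a12 * a23 * a31 + a13 * a21 * a32
    - a11 * a23 * a32 - a12 * a21 * a33 - a13 * a22 * a31"
  by (simp add: det_3)

lemma vector_matrix_mult_nth_3:
  fixes M :: "'a::comm_semiring_1^3^3"
  shows "(v v* M) $ j = v $ 1 * M $ 1 $ j + v $ 2 * M $ 2 $ j + v $ 3 * M $ 3 $ j"
  by (simp add: vector_matrix_mult_def sum_3)

lemma axis_vector_matrix_mult:
  fixes M :: "'a::comm_semiring_1^'n^'m"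
  shows "axis i 1 v* M = M $ i"
  by (simp add: vec_eq_iff vector_matrix_mult_def axis_def mult_delta_left)

lemma CHAR_eq_2_if_card_power_2:
  assumes "CARD('a::{idom,finite}) = 2 ^ n" "n > 0"
  shows "CHAR('a) = 2"
proof -
  have "CHAR('a) > 0" by (simp add: finite_imp_CHAR_pos)
  then have "prime CHAR('a)" by (rule prime_CHAR_semidom)
  moreover have "CHAR('a) dvd 2 ^ n" using CHAR_dvd_CARD[where 'a='a] assms(1) by simp
  ultimately show ?thesis
    using assms(2) by (simp add: prime_dvd_power_iff primes_dvd_imp_eq)
qed

lemma numeral_Bit0_CHAR_2:
  assumes "CHAR('a::ring_1) = 2"
  shows "(numeral (Num.Bit0 n) :: 'a) = 0"
proof -
  have "(2::'a) = 0" using of_nat_CHAR[where 'a='a] assms by simp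
  then show ?thesis by (metis mult_2 mult_zero_left numeral_Bit0)
qed

lemma numeral_Bit1_CHAR_2:
  assumes "CHAR('a::ring_1) = 2"
  shows "(numeral (Num.Bit1 n) :: 'a) = 1"
  using numeral_Bit0_CHAR_2[OF assms, of n] by (metis add_0 numeral_Bit0 numeral_Bit1)

lemmas CHAR_2_simps = numeral_Bit0_CHAR_2 numeral_Bit1_CHAR_2 uminus_CHAR_2 minus_CHAR_2

lemma frob_mat_mult:
  fixes M N :: "'a::comm_ring_1^3^3"
  assumes additive: "\<And>x y :: 'a. (x + y) ^ q = x ^ q + y ^ q"
  shows "frob_mat q (M ** N) = frob_mat q M ** frob_mat q N"
  by (simp add: frob_mat_def matrix_matrix_mult_def vec_eq_iff sum_3 additive power_mult_distrib)

lemma frob_mat_one: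
  assumes "q \<noteq> 0"
  shows "frob_mat q (mat 1 :: 'a::comm_ring_1^3^3) = mat 1"
  using assms by (simp add: frob_mat_def mat_def vec_eq_iff power_0_left)

lemma SU3_mult:
  fixes A B :: "'a::field^3^3"
  assumes additive: "\<And>x y :: 'a. (x + y) ^ q = x ^ q + y ^ q"
    and "A \<in> SU3 q" "B \<in> SU3 q"
  shows "A ** B \<in> SU3 q"
proof -
  have "transpose (frob_mat q (A ** B)) ** Wmat ** (A ** B)
      = transpose (frob_mat q B) ** (transpose (frob_mat q A) ** Wmat ** A) ** B"
    by (simp add: frob_mat_mult[OF additive] matrix_transpose_mul matrix_mul_assoc)
  also have "\<dots> = Wmat" using assms by (simp add: SU3_def)
  finally show ?thesis using assms by (simp add: SU3_def det_mul)
qed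

lemma SU3_matrix_inv:
  fixes A :: "'a::field^3^3"
  assumes additive: "\<And>x y :: 'a. (x + y) ^ q = x ^ q + y ^ q"
    and "q \<noteq> 0" "A \<in> SU3 q"
  shows "matrix_inv A \<in> SU3 q"
proof -
  let ?B = "matrix_inv A"
  have det: "det A = 1" and unitary: "transpose (frob_mat q A) ** Wmat ** A = Wmat"
    using assms by (auto simp: SU3_def)
  then have "invertible A" by (simp add: invertible_det_nz)
  then have inv: "A ** ?B = mat 1 \<and> ?B ** A = mat 1"
    unfolding invertible_def matrix_inv_def by (rule someI_ex)
  have "det ?B = 1" using det_mul[of A ?B] det inv by simp
  moreover have "transpose (frob_mat q ?B) ** Wmat ** ?B = Wmat"
  proof -
    have "transpose (frob_mat q ?B) ** Wmat ** ?B
      = transpose (frob_mat q ?B) ** (transpose (frob_mat q A) ** Wmat ** A) ** ?B"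
      using unitary by simp
    also have "\<dots> = transpose (frob_mat q (A ** ?B)) ** Wmat ** (A ** ?B)"
      by (simp add: frob_mat_mult[OF additive] matrix_transpose_mul matrix_mul_assoc)
    also have "\<dots> = Wmat" using inv by (simp add: frob_mat_one[OF \<open>q \<noteq> 0\<close>])
    finally show ?thesis .
  qed
  ultimately show ?thesis by (simp add: SU3_def)
qed

lemma gen_group_subset_SU3:
  fixes S :: "('a::field^3^3) set"
  assumes additive: "\<And>x y :: 'a. (x + y) ^ q = x ^ q + y ^ q"
    and "q \<noteq> 0" "S \<subseteq> SU3 q"
  shows "gen_group S \<subseteq> SU3 q"
proof
  fix A assume "A \<in> gen_group S"
  then show "A \<in> SU3 q"
  proof (induction rule: gen_group.induct)
    case one
    show ?case by (simp add: SU3_def frob_mat_one[OF \<open>q \<noteq> 0\<close>])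
  next
    case (gen s)
    then show ?case using \<open>S \<subseteq> SU3 q\<close> by blast
  next
    case (mult A B)
    then show ?case by (simp add: SU3_mult[OF additive])
  next
    case (inv A)
    then show ?case by (simp add: SU3_matrix_inv[OF additive \<open>q \<noteq> 0\<close>])
  qed
qed

lemma irreducible3_gen_groupI:
  fixes S :: "('a::field^3^3) set"
  assumes "\<And>U. vec.subspace U \<Longrightarrow> (\<And>g v. g \<in> S \<Longrightarrow> v \<in> U \<Longrightarrow> v v* g \<in> U) \<Longrightarrow>
             U \<noteq> {0} \<Longrightarrow> U = UNIV"
  shows "irreducible3 (gen_group S)"
  unfolding irreducible3_def
proof (rule notI, elim exE conjE)
  fix U :: "('a^3) set"
  assume U: "vec.subspace U" and dim: "vec.dim U \<in> {1, 2}"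
    and stable: "\<forall>g\<in>gen_group S. (\<lambda>v. v v* g) ` U = U"
  have "v v* g \<in> U" if "g \<in> S" "v \<in> U" for g v
    using stable gen_group.gen[OF \<open>g \<in> S\<close>] \<open>v \<in> U\<close> by blast
  moreover have "U \<noteq> {0}" using dim by auto
  ultimately have "U = UNIV" using assms U by blast
  then show False using dim vec_dim_card[where 'a='a and 'n=3] by simp
qed

lemma invariant_subspace_axis3_mem:
  fixes U :: "('a::field^3) set" and X Y :: "'a^3^3"
  assumes U: "vec.subspace U" "U \<noteq> {0}"
    and X: "\<And>v. v \<in> U \<Longrightarrow> v v* X \<in> U" and "X $ 2 $ 1 \<noteq> 0"
    and Y: "\<And>v. v \<in> U \<Longrightarrow> v v* Y \<in> U" and "Y $ 2 $ 1 = 0" "Y $ 3 $ 1 \<noteq> 0"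
    and Z: "\<And>v. v \<in> U \<Longrightarrow> v v* mat3 1 0 1 0 1 0 0 0 1 \<in> U"
  shows "axis 3 1 \<in> U"
proof -
  have "\<exists>w\<in>U. w $ 1 \<noteq> 0"
  proof -
    obtain v where v: "v \<in> U" "v \<noteq> 0" using U(2) vec.subspace_0[OF U(1)] by blast
    consider "v $ 1 \<noteq> 0" | "v $ 1 = 0" "v $ 3 \<noteq> 0" | "v $ 1 = 0" "v $ 2 \<noteq> 0" "v $ 3 = 0"
      using v(2) by (auto simp: vec_eq_iff forall_3)
    then show ?thesis
    proof cases
      case 1
      then show ?thesis using v by blast
    next
      case 2
      then have "(v v* Y) $ 1 \<noteq> 0"
        using assms by (simp add: vector_matrix_mult_nth_3)
      then show ?thesis using Y[OF v(1)] by blast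
    next
      case 3
      then have "(v v* X) $ 1 \<noteq> 0"
        using assms by (simp add: vector_matrix_mult_nth_3)
      then show ?thesis using X[OF v(1)] by blast
    qed
  qed
  then obtain w where w: "w \<in> U" "w $ 1 \<noteq> 0" by blast
  have "axis 3 1 = inverse (w $ 1) *s (w v* mat3 1 0 1 0 1 0 0 0 1 - w)"
    using w(2) by (simp add: vec_eq_iff forall_3 vector_matrix_mult_nth_3 axis_def field_simps)
  also have "\<dots> \<in> U"
    by (intro vec.subspace_scale[OF U(1)] vec.subspace_diff[OF U(1)] Z w(1))
  finally show ?thesis .
qed

lemma invariant_subspace_eq_UNIV:
  fixes U :: "('a::field^3) set" and X Y :: "'a^3^3"
  assumes U: "vec.subspace U" "U \<noteq> {0}"
    and X: "\<And>v. v \<in> U \<Longrightarrow> v v* X \<in> U" "X $ 1 $ 2 \<noteq> 0" "X $ 2 $ 1 \<noteq> 0"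
    and Y: "\<And>v. v \<in> U \<Longrightarrow> v v* Y \<in> U" "Y $ 2 $ 1 = 0" "Y $ 3 $ 1 \<noteq> 0" "Y $ 3 $ 2 = 0"
    and Z: "\<And>v. v \<in> U \<Longrightarrow> v v* mat3 1 0 1 0 1 0 0 0 1 \<in> U"
  shows "U = UNIV"
proof -
  have e3: "axis 3 1 \<in> U"
    using invariant_subspace_axis3_mem[OF U X(1,3) Y(1-3) Z] .
  have "axis 1 1 = inverse (Y $ 3 $ 1) *s (axis 3 1 v* Y - Y $ 3 $ 3 *s axis 3 1)"
    unfolding axis_vector_matrix_mult using Y(3,4) by (simp add: vec_eq_iff forall_3 axis_def)
  also have "\<dots> \<in> U"
    by (intro vec.subspace_scale[OF U(1)] vec.subspace_diff[OF U(1)] Y(1) e3)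
  finally have e1: "axis 1 1 \<in> U" .
  have "axis 2 1 = inverse (X $ 1 $ 2) *s
                     (axis 1 1 v* X - X $ 1 $ 1 *s axis 1 1 - X $ 1 $ 3 *s axis 3 1)"
    unfolding axis_vector_matrix_mult using X(2) by (simp add: vec_eq_iff forall_3 axis_def)
  also have "\<dots> \<in> U"
    by (intro vec.subspace_scale[OF U(1)] vec.subspace_diff[OF U(1)] X(1) e1 e3)
  finally have e2: "axis 2 1 \<in> U" .
  have "axis i 1 \<in> U" for i :: 3
    using e1 e2 e3 exhaust_3[of i] by auto
  then have "cart_basis \<subseteq> U" by (auto simp: cart_basis_def)
  then have "vec.span cart_basis \<subseteq> U" by (rule vec.span_minimal[OF _ U(1)])
  then show ?thesis by auto
qed

lemma transvection_in_SU3: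
  assumes "CHAR('a::field) = 2" "q \<noteq> 0"
  shows "(mat3 1 0 1 0 1 0 0 0 1 :: 'a^3^3) \<in> SU3 q"
  unfolding SU3_def
  using assms
  by (simp add: det_mat3 frob_mat_mat3 mat3_transpose Wmat_def mat3_mult mat3_eq_iff
                power_0_left CHAR_2_simps)

lemma X_in_SU3:
  fixes b :: "'a::field"
  assumes char: "CHAR('a) = 2" and additive: "\<And>x y :: 'a. (x + y) ^ q = x ^ q + y ^ q"
    and "q \<noteq> 0" and bq: "b ^ q = 1 + b"
  shows "mat3 b 1 1 (b ^ q) 0 1 (b ^ (q + 1)) b (b ^ q) \<in> SU3 q"
proof -
  have bqq: "(1 + b) ^ q = b"
    using char by (simp add: additive bq CHAR_2_simps)
  show ?thesis
    unfolding SU3_def mem_Collect_eq det_mat3 frob_mat_mat3 mat3_transpose Wmat_def mat3_mult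
    using assms bqq
    by (simp add: mat3_eq_iff power_0_left power_add power_mult_distrib algebra_simps
                  CHAR_2_simps power2_eq_square)
qed

lemma Y_in_SU3:
  fixes a b :: "'a::field"
  assumes char: "CHAR('a) = 2" and additive: "\<And>x y :: 'a. (x + y) ^ q = x ^ q + y ^ q"
    and "q \<noteq> 0" and bq: "b ^ q = 1 + b" and "a \<noteq> 0" and aq: "a ^ q = inverse a"
  shows "mat3 (a * b + inverse a * b ^ q) 0
               (a * (b + b ^ (q + 1)) + inverse a * (b ^ q + b ^ (q + 1)))
             0 1 0
             (a + inverse a) 0 (a * b + inverse a * b ^ q) \<in> SU3 q"
proof -
  define a' where "a' = inverse a"
  \<comment> \<open>a' sorts right after a, so a * (a' * x) = x applies to AC-normalised products\<close>
  have a': "a * a' = 1" "a * (a' * x) = x" "a ^ q = a'" "a' ^ q = a" for x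
    using \<open>a \<noteq> 0\<close> aq unfolding a'_def by (simp_all add: power_inverse)
  have bqq: "(1 + b) ^ q = b"
    using char by (simp add: additive bq CHAR_2_simps)
  show ?thesis
    unfolding SU3_def mem_Collect_eq det_mat3 frob_mat_mat3 mat3_transpose Wmat_def mat3_mult
      a'_def[symmetric]
    using char \<open>q \<noteq> 0\<close> bq bqq a'
    by (simp add: mat3_eq_iff additive power_0_left power_add power_mult_distrib algebra_simps
                  CHAR_2_simps power2_eq_square)
qed

lemma add_inverse_neq_0_CHAR_2:
  fixes a :: "'a::field"
  assumes "CHAR('a) = 2" "has_order a n" "n > 2"
  shows "a + inverse a \<noteq> 0"
proof
  assume "a + inverse a = 0"
  then have "inverse a = a" using assms(1) by (simp add: add_eq_0_iff uminus_CHAR_2)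
  moreover have "a \<noteq> 0" using assms(2) by (auto simp: has_order_def power_0_left)
  ultimately have "a ^ 2 = 1" by (metis power2_eq_square right_inverse)
  then show False using assms(2,3) by (auto simp: has_order_def)
qed

theorem lemma3p5:
  fixes f q :: nat and a b :: "'a::{field,finite}"
  assumes hq: "q = 2 ^ f" and hq4: "q \<ge> 4"
    and hcard: "CARD('a) = q ^ 2"
    and hb0: "b \<noteq> 0" and hbtr: "b + b ^ q = 1" and hbn: "b ^ (q + 1) \<noteq> 1"
    and ha0: "a \<noteq> 0" and haord: "has_order a (q + 1)"
    and h1: "\<forall>i\<in>{0, f, 2 * f div gcd 3 f, 4 * f div gcd 3 f}.
               (1 + b + b ^ 2) ^ (2 ^ i) \<noteq> a + inverse a + 1"
    and h2: "\<forall>i\<in>{0, f, 2 * f div gcd 3 f, 4 * f div gcd 3 f}.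
               (1 + b + b ^ 2) ^ (2 ^ i) \<noteq>
                 a * (1 + b + b ^ 3 + b ^ 4) + inverse a * (b ^ 2 + b ^ 3 + b ^ 4)"
    and h3: "a + inverse a + 1 \<noteq> a * (1 + b + b ^ 3 + b ^ 4) + inverse a * (b ^ 2 + b ^ 3 + b ^ 4)"
    and h4: "a + inverse a + 1 \<noteq> 0"
  defines "X \<equiv> mat3 b 1 1  (b ^ q) 0 1  (b ^ (q + 1)) b (b ^ q)"
    and "Y \<equiv> mat3 (a * b + inverse a * b ^ q) 0
                   (a * (b + b ^ (q + 1)) + inverse a * (b ^ q + b ^ (q + 1)))
                 0 1 0
                 (a + inverse a) 0 (a * b + inverse a * b ^ q)"
    and "Z \<equiv> mat3 1 0 1  0 1 0  0 0 1"
  shows "gen_group {X, Y, Z} \<subseteq> SU3 q \<and> irreducible3 (gen_group {X, Y, Z})"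
proof
  have "f > 0" using hq hq4 by (cases f) auto
  have char: "CHAR('a) = 2"
    using CHAR_eq_2_if_card_power_2[of "f * 2"] hcard \<open>f > 0\<close> by (simp add: hq power_mult)
  have additive: "(x + y) ^ q = x ^ q + y ^ q" for x y :: 'a
    using char hq by (simp add: freshmans_dream')
  have "q \<noteq> 0" using hq4 by simp
  have bq: "b ^ q = 1 + b"
    using hbtr char by (metis add_diff_cancel_left' minus_CHAR_2 add.commute)
  have aq: "a ^ q = inverse a"
    using haord ha0 by (simp add: has_order_def field_simps flip: power_Suc2)
  show "gen_group {X, Y, Z} \<subseteq> SU3 q"
    using X_in_SU3[OF char additive \<open>q \<noteq> 0\<close> bq] Y_in_SU3[OF char additive \<open>q \<noteq> 0\<close> bq ha0 aq]
      transvection_in_SU3[OF char \<open>q \<noteq> 0\<close>]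
    by (intro gen_group_subset_SU3[OF additive \<open>q \<noteq> 0\<close>]) (simp add: X_def Y_def Z_def)
  have "a + inverse a \<noteq> 0"
    using add_inverse_neq_0_CHAR_2[OF char haord] hq4 by simp
  then show "irreducible3 (gen_group {X, Y, Z})"
    using invariant_subspace_eq_UNIV[where X = X and Y = Y] hb0
    by (intro irreducible3_gen_groupI) (simp add: X_def Y_def Z_def)
qed

end
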